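(* Let $T>0$, $\mathbb{U}\subset\mathbb{R}^m$ compact non-empty, and $f:[0,T]\times\mathbb{R}^n\times\mathbb{U}\to\mathbb{R}^n$ continuous and Lipschitz in $x$ uniformly in $(s,u)$. Let $\overline{v}\in C([0,T]\times\mathbb{R}^n;\mathbb{R})$ be a viscosity supersolution of $-v_t+H(t,x,\nabla v)=0$ on $\Omega=\{(t,x)\in(0,T)\times\mathbb{R}^n\,|\,\overline{v}(t,x)<0\}$. Then $\overline{v}^\times(t,x):=\min\{\overline{v}(t,x),0\}$ belongs to $C([0,T]\times\mathbb{R}^n;\mathbb{R})$, is a viscosity supersolution of $-v_t+H(t,x,\nabla v)=0$ on $\Omega=(0,T)\times\mathbb{R}^n$, and satisfies $\overline{v}^\times(T,x)=\min\{\overline{v}(T,x),0\}$ for all $x\in\mathbb{R}^n$.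
   Context: The Hamiltonian is $H(t,x,p)=\max_{u\in\mathbb{U}}\langle -p,f(t,x,u)\rangle$. For an open set $\Omega\subseteq(0,T)\times\mathbb{R}^n$, a function $v\in C([0,T]\times\mathbb{R}^n;\mathbb{R})$ is a viscosity supersolution (resp. subsolution) of $-v_t+H(t,x,\nabla v)=0$ on $\Omega$ if for every $\xi\in C^1(\Omega;\mathbb{R})$ such that $v-\xi$ attains a local minimum (resp. local maximum) at $(t_0,x_0)\in\Omega$, one has $-\xi_t(t_0,x_0)+H(t_0,x_0,\nabla\xi(t_0,x_0))\ge 0$ (resp. $\le 0$). *)

theory Defs
  imports "HOL-Analysis.Analysis"
begin

text \<open>Hamiltonian H(t,x,p) = max over u in U of <-p, f(t,x,u)>.
  For compact nonempty U and continuous f the supremum is attained, i.e. is the maximum.\<close>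
definition hamiltonian ::
  "(real \<Rightarrow> real^'n \<Rightarrow> real^'m \<Rightarrow> real^'n) \<Rightarrow> (real^'m) set \<Rightarrow> real \<Rightarrow> real^'n \<Rightarrow> real^'n \<Rightarrow> real" where
  "hamiltonian f U t x p = (SUP u\<in>U. inner (- p) (f t x u))"

definition C1_on ::
  "(real \<times> (real^'n)) set \<Rightarrow> (real \<times> (real^'n) \<Rightarrow> real) \<Rightarrow> (real \<times> (real^'n) \<Rightarrow> (real \<times> (real^'n)) \<Rightarrow>\<^sub>L real) \<Rightarrow> bool" where
  "C1_on \<Omega> \<xi> D \<longleftrightarrow> (\<forall>z\<in>\<Omega>. (\<xi> has_derivative blinfun_apply (D z)) (at z)) \<and> continuous_on \<Omega> D"

definition time_deriv :: "((real \<times> (real^'n)) \<Rightarrow>\<^sub>L real) \<Rightarrow> real" where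
  "time_deriv L = blinfun_apply L (1, 0)"

definition grad :: "((real \<times> (real^'n)) \<Rightarrow>\<^sub>L real) \<Rightarrow> real^'n" where
  "grad L = (\<chi> i. blinfun_apply L (0, axis i 1))"

definition visc_supersol ::
  "(real \<times> (real^'n)) set \<Rightarrow> (real \<Rightarrow> real^'n \<Rightarrow> real^'m \<Rightarrow> real^'n) \<Rightarrow> (real^'m) set \<Rightarrow> (real \<Rightarrow> real^'n \<Rightarrow> real) \<Rightarrow> bool" where
  "visc_supersol \<Omega> f U v \<longleftrightarrow>
     (\<forall>\<xi> D t0 x0. C1_on \<Omega> \<xi> D \<longrightarrow> (t0, x0) \<in> \<Omega> \<longrightarrow>
        (\<exists>e>0. \<forall>t x. (t, x) \<in> \<Omega> \<inter> ball (t0, x0) e \<longrightarrow>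
              v t x - \<xi> (t, x) \<ge> v t0 x0 - \<xi> (t0, x0)) \<longrightarrow>
        - time_deriv (D (t0, x0)) + hamiltonian f U t0 x0 (grad (D (t0, x0))) \<ge> 0)"

end

theory Submission
  imports Defs
begin

text \<open>Near a point where \<open>vbar < 0\<close> the function \<open>min vbar 0\<close> coincides with \<open>vbar\<close>, so
  the supersolution test there is the one for \<open>vbar\<close> on \<open>{vbar < 0}\<close>. At a point where
  \<open>vbar \<ge> 0\<close> the function \<open>min vbar 0\<close> attains its maximum value \<open>0\<close>; a test function touching
  it from below then has a local maximum, so its derivative vanishes, and the inequality
  reduces to \<open>H(t,x,0) = 0\<close>.\<close>

lemma time_deriv_0 [simp]: "time_deriv 0 = 0"
  by (simp add: time_deriv_def)

lemma grad_0 [simp]: "grad 0 = 0"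
  by (simp add: grad_def vec_eq_iff)

lemma hamiltonian_zero_covector:
  assumes "U \<noteq> {}"
  shows "hamiltonian f U t x 0 = 0"
  using assms by (simp add: hamiltonian_def)

lemma C1_on_subset:
  assumes "C1_on \<Omega> \<xi> D" and "\<Omega>' \<subseteq> \<Omega>"
  shows "C1_on \<Omega>' \<xi> D"
  using assms unfolding C1_on_def by (meson continuous_on_subset subsetD)

lemma C1_on_local_max_derivative_zero:
  assumes "C1_on \<Omega> \<xi> D" and "open \<Omega>" and "z \<in> \<Omega>" and "e > 0"
    and "\<forall>y\<in>\<Omega> \<inter> ball z e. \<xi> y \<le> \<xi> z"
  shows "D z = 0"
proof -
  have "(\<xi> has_derivative blinfun_apply (D z)) (at z)"
    using assms(1,3) by (simp add: C1_on_def)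
  then have "blinfun_apply (D z) = (\<lambda>_. 0)"
    using differential_zero_maxmin[of z "\<Omega> \<inter> ball z e"] assms(2-5) by auto
  then show ?thesis
    by (intro blinfun_eqI) simp
qed

lemma visc_supersol_min_const:
  fixes v :: "real \<Rightarrow> real^'n \<Rightarrow> real"
  assumes "open \<Omega>" and "U \<noteq> {}"
    and supersol: "visc_supersol {(t, x). (t, x) \<in> \<Omega> \<and> v t x < c} f U v"
  shows "visc_supersol \<Omega> f U (\<lambda>t x. min (v t x) c)"
  unfolding visc_supersol_def
proof (intro allI impI)
  fix \<xi> D t0 x0
  assume C1: "C1_on \<Omega> \<xi> D" and z0: "(t0, x0) \<in> \<Omega>"
    and "\<exists>e>0. \<forall>t x. (t, x) \<in> \<Omega> \<inter> ball (t0, x0) e \<longrightarrow>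
           min (v t x) c - \<xi> (t, x) \<ge> min (v t0 x0) c - \<xi> (t0, x0)"
  then obtain e where e: "e > 0"
    and local_min: "\<And>t x. (t, x) \<in> \<Omega> \<inter> ball (t0, x0) e \<Longrightarrow>
           min (v t x) c - \<xi> (t, x) \<ge> min (v t0 x0) c - \<xi> (t0, x0)"
    by blast
  show "- time_deriv (D (t0, x0)) + hamiltonian f U t0 x0 (grad (D (t0, x0))) \<ge> 0"
  proof (cases "v t0 x0 < c")
    case True
    let ?\<Omega>\<^sub>c = "{(t, x). (t, x) \<in> \<Omega> \<and> v t x < c}"
    have "C1_on ?\<Omega>\<^sub>c \<xi> D"
      using C1 by (rule C1_on_subset) auto
    moreover have "(t0, x0) \<in> ?\<Omega>\<^sub>c"
      using True z0 by simp
    moreover have "\<forall>t x. (t, x) \<in> ?\<Omega>\<^sub>c \<inter> ball (t0, x0) e \<longrightarrow>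
        v t x - \<xi> (t, x) \<ge> v t0 x0 - \<xi> (t0, x0)"
      using local_min True by fastforce
    ultimately show ?thesis
      using supersol e unfolding visc_supersol_def by blast
  next
    case False
    then have "\<forall>y\<in>\<Omega> \<inter> ball (t0, x0) e. \<xi> y \<le> \<xi> (t0, x0)"
      using local_min by fastforce
    then have "D (t0, x0) = 0"
      using C1_on_local_max_derivative_zero[OF C1 \<open>open \<Omega>\<close> z0 e] by blast
    then show ?thesis
      by (simp add: hamiltonian_zero_covector[OF \<open>U \<noteq> {}\<close>])
  qed
qed

theorem lemma5:
  fixes T :: real
    and U :: "(real^'m) set"
    and f :: "real \<Rightarrow> real^'n \<Rightarrow> real^'m \<Rightarrow> real^'n"
    and vbar :: "real \<Rightarrow> real^'n \<Rightarrow> real"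
  assumes "T > 0"
    and "compact U" and "U \<noteq> {}"
    and "continuous_on ({0..T} \<times> UNIV \<times> U) (\<lambda>(s, x, u). f s x u)"
    and "\<exists>L. \<forall>s\<in>{0..T}. \<forall>u\<in>U. \<forall>x y. norm (f s x u - f s y u) \<le> L * norm (x - y)"
    and "continuous_on ({0..T} \<times> UNIV) (\<lambda>(t, x). vbar t x)"
    and "visc_supersol {(t, x). t \<in> {0<..<T} \<and> vbar t x < 0} f U vbar"
  shows "continuous_on ({0..T} \<times> UNIV) (\<lambda>(t, x). min (vbar t x) 0)
     \<and> visc_supersol ({0<..<T} \<times> UNIV) f U (\<lambda>t x. min (vbar t x) 0)
     \<and> (\<forall>x. (\<lambda>t x. min (vbar t x) 0) T x = min (vbar T x) 0)"
proof -
  have "continuous_on ({0..T} \<times> UNIV) (\<lambda>z. min ((\<lambda>(t, x). vbar t x) z) 0)"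
    by (intro continuous_on_min assms(6) continuous_on_const)
  then have "continuous_on ({0..T} \<times> UNIV) (\<lambda>(t, x). min (vbar t x) 0)"
    by (simp add: case_prod_beta)
  moreover have "visc_supersol ({0<..<T} \<times> UNIV) f U (\<lambda>t x. min (vbar t x) 0)"
  proof (rule visc_supersol_min_const)
    show "visc_supersol {(t, x). (t, x) \<in> {0<..<T} \<times> UNIV \<and> vbar t x < 0} f U vbar"
      using assms(7) by simp
  qed (use assms(3) in \<open>auto intro: open_Times\<close>)
  ultimately show ?thesis
    by simp
qed

end
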